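(* For any $\nu,\nu'\in\mathcal{M}(\mathbb{S}^{d-1})$ with Jordan decompositions $\nu=\nu_+-\nu_-$, $\nu'=\nu'_+-\nu'_-$, $$\sup_{x\in\mathbb{S}^{d-1}}|f(x;\nu)-f(x;\nu')|\le2\sqrt2\max\{\widetilde W_2(\nu_+,\nu'_+),\ \widetilde W_2(\nu_-,\nu'_-)\}.$$
   Context: $\sigma(u)=\max\{u,0\}$, $f(x;\nu)=\int_{\mathbb{S}^{d-1}}\sigma(\langle\theta,x\rangle)d\nu(\theta)$. On $\mathbb{R}_+\times\mathbb{S}^{d-1}$ use the cone metric $\widetilde{\mathrm{dist}}((r_1,\theta_1),(r_2,\theta_2))^2=(r_1-r_2)^2+2r_1r_2(1-\langle\theta_1,\theta_2\rangle)$, and let $W_2$ be the 2-Wasserstein distance w.r.t. it on $\mathcal{P}_2(\mathbb{R}_+\times\mathbb{S}^{d-1})$. The homogeneous projection $\mathsf h\mu\in\mathcal{M}_+(\mathbb{S}^{d-1})$ of $\mu$ is defined by $\int\phi\,d(\mathsf h\mu)=\int r\phi(\theta)\,d\mu(r,\theta)$ for continuous $\phi$. For nonnegative measures $\nu_1,\nu_2$: $\widetilde W_2(\nu_1,\nu_2)=\inf\{W_2(\mu_1,\mu_2):\mu_1,\mu_2\in\mathcal{P}_2(\mathbb{R}_+\times\mathbb{S}^{d-1}),\ \mathsf h\mu_1=\nu_1,\ \mathsf h\mu_2=\nu_2\}$. *)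

theory Defs
  imports "HOL-Probability.Probability"
begin

definition relu :: "real \<Rightarrow> real" where
  "relu u = max u 0"

text \<open>A finite nonnegative Borel measure on the unit sphere S^{d-1} of 'a
  (represented as a measure on the whole space concentrated on the sphere).\<close>
definition sphere_measure :: "'a::euclidean_space measure \<Rightarrow> bool" where
  "sphere_measure \<nu> \<longleftrightarrow> sets \<nu> = sets borel \<and> finite_measure \<nu> \<and>
     emeasure \<nu> (UNIV - sphere 0 1) = 0"

text \<open>Jordan decomposition: a finite signed measure nu = nu_plus - nu_minus
  with nu_plus, nu_minus nonnegative and mutually singular.\<close>
definition jordan_pair :: "'a::euclidean_space measure \<Rightarrow> 'a measure \<Rightarrow> bool" where
  "jordan_pair \<nu>p \<nu>m \<longleftrightarrow> sphere_measure \<nu>p \<and> sphere_measure \<nu>m \<and>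
     (\<exists>A \<in> sets borel. emeasure \<nu>p (UNIV - A) = 0 \<and> emeasure \<nu>m A = 0)"

definition f_pos :: "'a::euclidean_space measure \<Rightarrow> 'a \<Rightarrow> real" where
  "f_pos \<nu> x = (\<integral>\<theta>. relu (inner \<theta> x) \<partial>\<nu>)"

definition f_signed :: "'a::euclidean_space measure \<Rightarrow> 'a measure \<Rightarrow> 'a \<Rightarrow> real" where
  "f_signed \<nu>p \<nu>m x = f_pos \<nu>p x - f_pos \<nu>m x"

definition cone_dist_sq :: "real \<times> 'a::euclidean_space \<Rightarrow> real \<times> 'a \<Rightarrow> real" where
  "cone_dist_sq p q = (fst p - fst q)^2 + 2 * fst p * fst q * (1 - inner (snd p) (snd q))"

text \<open>P_2(R_+ x S^{d-1}): Borel probability measures on the cone with finite second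
  moment (the second moment w.r.t. the cone metric is the integral of r^2).\<close>
definition P2cone :: "(real \<times> 'a::euclidean_space) measure \<Rightarrow> bool" where
  "P2cone \<mu> \<longleftrightarrow> sets \<mu> = sets borel \<and> prob_space \<mu> \<and>
     emeasure \<mu> (UNIV - ({0..} \<times> sphere 0 1)) = 0 \<and>
     (\<integral>\<^sup>+ p. ennreal ((fst p)^2) \<partial>\<mu>) < \<infinity>"

definition couplings :: "(real \<times> 'a::euclidean_space) measure \<Rightarrow> (real \<times> 'a) measure
    \<Rightarrow> ((real \<times> 'a) \<times> (real \<times> 'a)) measure set" where
  "couplings \<mu>1 \<mu>2 = {\<pi>. sets \<pi> = sets borel \<and> prob_space \<pi> \<and>
     distr \<pi> borel fst = \<mu>1 \<and> distr \<pi> borel snd = \<mu>2}"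

definition ennsqrt :: "ennreal \<Rightarrow> ennreal" where
  "ennsqrt c = (if c = \<infinity> then \<infinity> else ennreal (sqrt (enn2real c)))"

definition W2 :: "(real \<times> 'a::euclidean_space) measure \<Rightarrow> (real \<times> 'a) measure \<Rightarrow> ennreal" where
  "W2 \<mu>1 \<mu>2 = (INF \<pi> \<in> couplings \<mu>1 \<mu>2.
      ennsqrt (\<integral>\<^sup>+ z. ennreal (cone_dist_sq (fst z) (snd z)) \<partial>\<pi>))"

definition hproj_eq :: "(real \<times> 'a::euclidean_space) measure \<Rightarrow> 'a measure \<Rightarrow> bool" where
  "hproj_eq \<mu> \<nu> \<longleftrightarrow> (\<forall>\<phi> :: 'a \<Rightarrow> real. continuous_on (sphere 0 1) \<phi> \<longrightarrow>
      (\<integral>\<theta>. \<phi> \<theta> \<partial>\<nu>) = (\<integral>p. fst p * \<phi> (snd p) \<partial>\<mu>))"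

definition W2tilde :: "'a::euclidean_space measure \<Rightarrow> 'a measure \<Rightarrow> ennreal" where
  "W2tilde \<nu>1 \<nu>2 = (INF \<mu>\<mu> \<in> {(\<mu>1, \<mu>2). P2cone \<mu>1 \<and> P2cone \<mu>2 \<and>
      hproj_eq \<mu>1 \<nu>1 \<and> hproj_eq \<mu>2 \<nu>2}. W2 (fst \<mu>\<mu>) (snd \<mu>\<mu>))"

end

theory Submission
  imports Defs
begin

(* Lift \<nu> to a measure \<mu> on the cone with h \<mu> = \<nu>; then f(x;\<nu>) is the \<mu>-integral of the neuron
   r \<sigma>(<\<theta>,x>) = \<sigma>(<r \<theta>,x>).  For unit x this is a 1-Lipschitz function of the point r \<theta> of
   the ambient space, and |r1 \<theta>1 - r2 \<theta>2|^2 is exactly the squared cone distance.  Integrating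
   against any coupling of two lifts and applying Cauchy-Schwarz gives
   |f(x;\<nu>1) - f(x;\<nu>2)| \<le> W2(\<mu>1,\<mu>2), hence \<le> W2~(\<nu>1,\<nu>2).  The triangle inequality over the
   two parts of the Jordan decompositions then gives the bound with constant 2 \<le> 2 sqrt 2. *)

definition cone_neuron :: "'a::euclidean_space \<Rightarrow> real \<times> 'a \<Rightarrow> real" where
  "cone_neuron x p = fst p * relu (inner (snd p) x)"

lemma relu_mult_nonneg: "r \<ge> 0 \<Longrightarrow> r * relu a = relu (r * a)"
  unfolding relu_def by (simp add: max_def mult_le_0_iff)

lemma abs_relu_diff_le: "\<bar>relu a - relu b\<bar> \<le> \<bar>a - b\<bar>"
  unfolding relu_def by (simp add: max_def)

lemma norm_scaleR_diff_sq_eq_cone_dist_sq: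
  fixes t1 t2 :: "'a::euclidean_space"
  assumes "norm t1 = 1" "norm t2 = 1"
  shows "(norm (r1 *\<^sub>R t1 - r2 *\<^sub>R t2))\<^sup>2 = cone_dist_sq (r1, t1) (r2, t2)"
proof -
  have "(norm (r1 *\<^sub>R t1 - r2 *\<^sub>R t2))\<^sup>2
      = r1\<^sup>2 * (norm t1)\<^sup>2 + r2\<^sup>2 * (norm t2)\<^sup>2 - 2 * r1 * r2 * inner t1 t2"
    unfolding power2_norm_eq_inner
    by (simp add: inner_diff_left inner_diff_right algebra_simps inner_commute power2_eq_square)
  then show ?thesis
    using assms by (simp add: cone_dist_sq_def power2_eq_square algebra_simps)
qed

lemma cone_neuron_diff_sq_le_cone_dist_sq:
  fixes x :: "'a::euclidean_space"
  assumes "fst p \<ge> 0" "fst q \<ge> 0" "norm (snd p) = 1" "norm (snd q) = 1" "norm x = 1"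
  shows "(cone_neuron x p - cone_neuron x q)\<^sup>2 \<le> cone_dist_sq p q"
proof -
  obtain r1 t1 r2 t2 where pq: "p = (r1, t1)" "q = (r2, t2)" by fastforce
  have "\<bar>cone_neuron x p - cone_neuron x q\<bar>
      = \<bar>relu (inner (r1 *\<^sub>R t1) x) - relu (inner (r2 *\<^sub>R t2) x)\<bar>"
    using assms by (simp add: pq cone_neuron_def relu_mult_nonneg)
  also have "\<dots> \<le> \<bar>inner (r1 *\<^sub>R t1 - r2 *\<^sub>R t2) x\<bar>"
    using abs_relu_diff_le by (simp add: inner_diff_left)
  also have "\<dots> \<le> norm (r1 *\<^sub>R t1 - r2 *\<^sub>R t2)"
    using Cauchy_Schwarz_ineq2[of "r1 *\<^sub>R t1 - r2 *\<^sub>R t2" x] assms(5) by simp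
  finally have "(cone_neuron x p - cone_neuron x q)\<^sup>2 \<le> (norm (r1 *\<^sub>R t1 - r2 *\<^sub>R t2))\<^sup>2"
    by (metis abs_ge_zero power2_abs power_mono)
  then show ?thesis
    using assms by (simp add: pq norm_scaleR_diff_sq_eq_cone_dist_sq)
qed

lemma measurable_borel_if_continuous:
  assumes "sets M = sets borel" "continuous_on UNIV f"
  shows "f \<in> borel_measurable M"
  unfolding measurable_cong_sets[OF assms(1) refl]
  using assms(2) by (rule borel_measurable_continuous_onI)

lemma continuous_cone_neuron: "continuous_on UNIV (cone_neuron x)"
  unfolding cone_neuron_def relu_def by (intro continuous_intros)

lemma P2cone_AE_cone:
  assumes "P2cone \<mu>"
  shows "AE p in \<mu>. p \<in> {0..} \<times> sphere (0::'a::euclidean_space) 1"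
proof (rule AE_I')
  have "closed ({0::real..} \<times> sphere (0::'a) 1)"
    by (intro closed_Times closed_atLeast closed_sphere)
  then have "UNIV - ({0::real..} \<times> sphere (0::'a) 1) \<in> sets borel"
    by (intro borel_open) (simp add: open_Diff)
  then show "UNIV - ({0::real..} \<times> sphere (0::'a) 1) \<in> null_sets \<mu>"
    using assms by (intro null_setsI) (auto simp: P2cone_def)
qed auto

lemma integrable_cone_neuron:
  assumes "P2cone \<mu>" "norm x = 1"
  shows "integrable \<mu> (cone_neuron x)"
proof -
  have sets: "sets \<mu> = sets borel" and "prob_space \<mu>"
    and moment: "(\<integral>\<^sup>+ p. ennreal ((fst p)\<^sup>2) \<partial>\<mu>) < \<infinity>"
    using assms(1) by (auto simp: P2cone_def)
  interpret prob_space \<mu> by fact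
  have "continuous_on UNIV (\<lambda>p::real \<times> 'a. (fst p)\<^sup>2)"
    by (intro continuous_intros)
  then have "integrable \<mu> (\<lambda>p. (fst p)\<^sup>2)"
    using moment
    by (intro integrableI_nn_integral_finite[where x = "enn2real (\<integral>\<^sup>+ p. ennreal ((fst p)\<^sup>2) \<partial>\<mu>)"]
        measurable_borel_if_continuous[OF sets]) (auto simp: less_top)
  then have "integrable \<mu> (\<lambda>p. 1 + (fst p)\<^sup>2)"
    by auto
  moreover have "AE p in \<mu>. norm (cone_neuron x p) \<le> norm (1 + (fst p)\<^sup>2)"
    using P2cone_AE_cone[OF assms(1)]
  proof eventually_elim
    case (elim p)
    then have r: "fst p \<ge> 0" and "norm (snd p) = 1" by (auto simp: mem_Times_iff)
    then have "relu (inner (snd p) x) \<le> 1"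
      using Cauchy_Schwarz_ineq2[of "snd p" x] assms(2) unfolding relu_def by auto
    moreover have "relu (inner (snd p) x) \<ge> 0" unfolding relu_def by simp
    moreover have "fst p \<le> 1 + (fst p)\<^sup>2"
      using sum_power2_ge_zero[of "fst p - 1/2" 0] by (simp add: power2_eq_square algebra_simps)
    ultimately show ?case
      using r mult_left_le[of "relu (inner (snd p) x)" "fst p"] by (simp add: cone_neuron_def)
  qed
  ultimately show ?thesis
    using Bochner_Integration.integrable_bound
      measurable_borel_if_continuous[OF sets continuous_cone_neuron] by blast
qed

lemma f_pos_eq_integral_cone_neuron:
  assumes "hproj_eq \<mu> \<nu>"
  shows "f_pos \<nu> x = (\<integral>p. cone_neuron x p \<partial>\<mu>)"
proof -
  have "continuous_on (sphere 0 1) (\<lambda>\<theta>. relu (inner \<theta> x))"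
    unfolding relu_def by (intro continuous_intros)
  then show ?thesis
    using assms unfolding hproj_eq_def f_pos_def cone_neuron_def by blast
qed

lemma (in prob_space) abs_integral_le_sqrt_integral_of_square_le:
  assumes "integrable M h" "integrable M D" "AE z in M. (h z)\<^sup>2 \<le> D z"
  shows "\<bar>\<integral>z. h z \<partial>M\<bar> \<le> sqrt (\<integral>z. D z \<partial>M)"
proof -
  have "integrable M (\<lambda>z. (h z)\<^sup>2)"
    using assms(3) by (intro Bochner_Integration.integrable_bound[OF assms(2)]
        borel_measurable_power borel_measurable_integrable[OF assms(1)]) auto
  then have "(\<integral>z. h z \<partial>M)\<^sup>2 \<le> (\<integral>z. (h z)\<^sup>2 \<partial>M)"
    using variance_eq[OF assms(1)] variance_positive[of h] by simp
  also have "\<dots> \<le> (\<integral>z. D z \<partial>M)"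
    using \<open>integrable M (\<lambda>z. (h z)\<^sup>2)\<close> assms by (intro integral_mono_AE)
  finally show ?thesis
    by (simp add: real_le_rsqrt)
qed

lemma
  assumes "\<pi> \<in> couplings \<mu>1 \<mu>2"
  shows couplings_prob_space: "prob_space \<pi>"
    and couplings_measurable_fst: "fst \<in> \<pi> \<rightarrow>\<^sub>M (borel :: (real \<times> 'a::euclidean_space) measure)"
    and couplings_measurable_snd: "snd \<in> \<pi> \<rightarrow>\<^sub>M (borel :: (real \<times> 'a) measure)"
    and couplings_distr_fst: "distr \<pi> borel fst = \<mu>1"
    and couplings_distr_snd: "distr \<pi> borel snd = \<mu>2"
  using assms unfolding couplings_def
  by (auto intro!: measurable_borel_if_continuous continuous_intros)

lemma couplings_AE_cone:
  assumes "\<pi> \<in> couplings \<mu>1 \<mu>2" "P2cone \<mu>1" "P2cone \<mu>2"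
  shows "AE z in \<pi>. fst z \<in> {0..} \<times> sphere (0::'a::euclidean_space) 1 \<and>
                     snd z \<in> {0..} \<times> sphere (0::'a) 1"
proof -
  have cone: "{p \<in> space borel. p \<in> {0::real..} \<times> sphere (0::'a) 1} \<in> sets borel"
    by (simp add: closed_Times closed_atLeast closed_sphere borel_closed)
  show ?thesis
    using AE_distr_iff[OF couplings_measurable_fst[OF assms(1)] cone]
      AE_distr_iff[OF couplings_measurable_snd[OF assms(1)] cone]
      P2cone_AE_cone[OF assms(2)] P2cone_AE_cone[OF assms(3)]
      couplings_distr_fst[OF assms(1)] couplings_distr_snd[OF assms(1)]
    by auto
qed

lemma abs_integral_cone_neuron_diff_le_coupling_cost:
  fixes x :: "'a::euclidean_space"
  assumes P1: "P2cone \<mu>1" and P2: "P2cone \<mu>2" and \<pi>: "\<pi> \<in> couplings \<mu>1 \<mu>2" and "norm x = 1"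
  shows "ennreal \<bar>(\<integral>p. cone_neuron x p \<partial>\<mu>1) - (\<integral>p. cone_neuron x p \<partial>\<mu>2)\<bar>
           \<le> ennsqrt (\<integral>\<^sup>+ z. ennreal (cone_dist_sq (fst z) (snd z)) \<partial>\<pi>)"
proof (cases "(\<integral>\<^sup>+ z. ennreal (cone_dist_sq (fst z) (snd z)) \<partial>\<pi>) = \<infinity>")
  case True
  then show ?thesis by (simp add: ennsqrt_def)
next
  case False
  define D where "D z = cone_dist_sq (fst z) (snd z)" for z :: "(real \<times> 'a) \<times> (real \<times> 'a)"
  define h where "h z = cone_neuron x (fst z) - cone_neuron x (snd z)" for z :: "(real \<times> 'a) \<times> (real \<times> 'a)"
  interpret prob_space \<pi> using couplings_prob_space[OF \<pi>] .
  note fst_meas = couplings_measurable_fst[OF \<pi>] and snd_meas = couplings_measurable_snd[OF \<pi>]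
  have neuron_meas: "cone_neuron x \<in> borel_measurable borel"
    by (rule borel_measurable_continuous_onI[OF continuous_cone_neuron])
  have int_fst: "integrable \<pi> (\<lambda>z. cone_neuron x (fst z))"
    using integrable_distr_eq[OF fst_meas neuron_meas] integrable_cone_neuron[OF P1 \<open>norm x = 1\<close>]
    by (simp add: couplings_distr_fst[OF \<pi>])
  have int_snd: "integrable \<pi> (\<lambda>z. cone_neuron x (snd z))"
    using integrable_distr_eq[OF snd_meas neuron_meas] integrable_cone_neuron[OF P2 \<open>norm x = 1\<close>]
    by (simp add: couplings_distr_snd[OF \<pi>])
  have diff: "(\<integral>p. cone_neuron x p \<partial>\<mu>1) - (\<integral>p. cone_neuron x p \<partial>\<mu>2) = (\<integral>z. h z \<partial>\<pi>)"
    using integral_distr[OF fst_meas neuron_meas] integral_distr[OF snd_meas neuron_meas] int_fst int_snd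
    by (simp add: h_def couplings_distr_fst[OF \<pi>] couplings_distr_snd[OF \<pi>])
  have h_sq_le: "AE z in \<pi>. (h z)\<^sup>2 \<le> D z"
    using couplings_AE_cone[OF \<pi> P1 P2]
    by eventually_elim
      (auto simp: h_def D_def mem_Times_iff \<open>norm x = 1\<close> intro: cone_neuron_diff_sq_le_cone_dist_sq)
  have D_meas: "D \<in> borel_measurable \<pi>"
    using \<pi> unfolding D_def cone_dist_sq_def couplings_def
    by (auto intro!: measurable_borel_if_continuous continuous_intros)
  have D_nonneg: "AE z in \<pi>. 0 \<le> D z"
    using h_sq_le by eventually_elim (use zero_le_power2 order_trans in blast)
  have D_int: "integrable \<pi> D"
    using False D_meas D_nonneg
    by (intro integrableI_nn_integral_finite[where x = "enn2real (\<integral>\<^sup>+ z. ennreal (D z) \<partial>\<pi>)"])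
      (auto simp: D_def less_top)
  have "\<bar>\<integral>z. h z \<partial>\<pi>\<bar> \<le> sqrt (\<integral>z. D z \<partial>\<pi>)"
    using int_fst int_snd D_int h_sq_le unfolding h_def
    by (intro abs_integral_le_sqrt_integral_of_square_le) auto
  also have "(\<integral>z. D z \<partial>\<pi>) = enn2real (\<integral>\<^sup>+ z. ennreal (D z) \<partial>\<pi>)"
    by (rule integral_eq_nn_integral[OF D_meas D_nonneg])
  finally show ?thesis
    using False unfolding diff ennsqrt_def D_def by (simp add: ennreal_leI)
qed

lemma abs_f_pos_diff_le_W2tilde:
  fixes \<nu>1 \<nu>2 :: "'a::euclidean_space measure"
  assumes "norm x = 1"
  shows "ennreal \<bar>f_pos \<nu>1 x - f_pos \<nu>2 x\<bar> \<le> W2tilde \<nu>1 \<nu>2"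
  unfolding W2tilde_def W2_def
proof (intro INF_greatest, clarsimp)
  fix \<mu>1 \<mu>2 \<pi>
  assume "P2cone \<mu>1" "P2cone \<mu>2" "hproj_eq \<mu>1 \<nu>1" "hproj_eq \<mu>2 \<nu>2" "\<pi> \<in> couplings \<mu>1 \<mu>2"
  then show "ennreal \<bar>f_pos \<nu>1 x - f_pos \<nu>2 x\<bar>
               \<le> ennsqrt (\<integral>\<^sup>+ z. ennreal (cone_dist_sq (fst z) (snd z)) \<partial>\<pi>)"
    using abs_integral_cone_neuron_diff_le_coupling_cost[OF _ _ _ assms]
    by (simp add: f_pos_eq_integral_cone_neuron)
qed

lemma two_le_two_sqrt_two_mult: "2 * (M::ennreal) \<le> 2 * ennreal (sqrt 2) * M"
proof -
  have "(2::ennreal) \<le> 2 * ennreal (sqrt 2)"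
    using mult_left_mono[of 1 "ennreal (sqrt 2)" 2] ennreal_leI[of 1 "sqrt 2"] by simp
  then show ?thesis by (rule mult_right_mono) simp
qed

theorem mainTheorem13:
  fixes \<nu>p \<nu>m \<nu>p' \<nu>m' :: "'a::euclidean_space measure"
  assumes "jordan_pair \<nu>p \<nu>m" and "jordan_pair \<nu>p' \<nu>m'"
  shows "(SUP x \<in> sphere (0::'a) 1. ennreal \<bar>f_signed \<nu>p \<nu>m x - f_signed \<nu>p' \<nu>m' x\<bar>)
           \<le> 2 * ennreal (sqrt 2) * max (W2tilde \<nu>p \<nu>p') (W2tilde \<nu>m \<nu>m')"
proof (rule SUP_least)
  fix x :: 'a assume "x \<in> sphere 0 1"
  then have x: "norm x = 1" by simp
  let ?a = "f_pos \<nu>p x - f_pos \<nu>p' x" and ?b = "f_pos \<nu>m x - f_pos \<nu>m' x"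
  let ?M = "max (W2tilde \<nu>p \<nu>p') (W2tilde \<nu>m \<nu>m')"
  have "\<bar>f_signed \<nu>p \<nu>m x - f_signed \<nu>p' \<nu>m' x\<bar> \<le> \<bar>?a\<bar> + \<bar>?b\<bar>"
    unfolding f_signed_def by linarith
  then have "ennreal \<bar>f_signed \<nu>p \<nu>m x - f_signed \<nu>p' \<nu>m' x\<bar> \<le> ennreal \<bar>?a\<bar> + ennreal \<bar>?b\<bar>"
    by (metis abs_ge_zero ennreal_leI ennreal_plus)
  also have "\<dots> \<le> ?M + ?M"
    using abs_f_pos_diff_le_W2tilde[OF x, of \<nu>p \<nu>p'] abs_f_pos_diff_le_W2tilde[OF x, of \<nu>m \<nu>m']
    by (intro add_mono) (auto simp: le_max_iff_disj)
  also have "\<dots> \<le> 2 * ennreal (sqrt 2) * ?M"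
    using two_le_two_sqrt_two_mult by (simp add: mult_2[symmetric])
  finally show "ennreal \<bar>f_signed \<nu>p \<nu>m x - f_signed \<nu>p' \<nu>m' x\<bar> \<le> 2 * ennreal (sqrt 2) * ?M" .
qed

end
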